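(* Let $\Phi=(V,Q,\mathcal{C})$ be a CSP formula with atomic constraints and $h=(h_v)_{v\in V}$ a projection scheme satisfying the entropy criterion with parameters $0<\beta<\alpha<1$. Let $q_v=|Q_v|$, $D$ the maximum degree of the dependency graph, and $p=\max_{c\in\mathcal{C}}\prod_{v\in\mathrm{vbl}(c)}\frac1{q_v}$. Let $X,Y\in\Sigma=\bigotimes_v\Sigma_v$ differ only at a variable $v_0$, and let $v^\star\in V\setminus\{v_0\}$; define $\Phi^X,\Phi^Y$ as in the context. If $\log\frac1p\ge\frac{55}{\beta}(\log D+3)$, then there exist projection schemes $h^X$ for $\Phi^X$ and $h^Y$ for $\Phi^Y$ satisfying the coupling projection condition.
   Context: A CSP formula: variables $V$ with finite domains $Q_v$ ($|Q_v|\ge2$), constraints $c$ on $\mathrm{vbl}(c)\subseteq V$; atomic means violated by exactly one configuration. Dependency graph: vertices $\mathcal{C}$, adjacency iff variable sets intersect. Projection scheme $h_v:Q_v\to\Sigma_v$, $s_v=|\Sigma_v|$. Entropy criterion with $(\alpha,\beta)$: $\lfloor q_v/s_v\rfloor\le|h_v^{-1}(y)|\le\lceil q_v/s_v\rceil$ for all $v,y$; and for each $c$: $\sum_{v\in\mathrm{vbl}(c)}\log\lceil q_v/s_v\rceil\le\alpha\sum_{v\in\mathrm{vbl}(c)}\log q_v$, $\sum_{v\in\mathrm{vbl}(c)}\log\lfloor q_v/s_v\rfloor\ge\beta\sum_{v\in\mathrm{vbl}(c)}\log q_v$. The formulas $\Phi^X=(V,(Q^X_u)_u,\mathcal{C})$,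 $\Phi^Y=(V,(Q^Y_u)_u,\mathcal{C})$ have the same constraints as $\Phi$ and domains $Q^X_u=h_u^{-1}(X_u)$, $Q^Y_u=h_u^{-1}(Y_u)$ for $u\ne v^\star$, and $Q^X_{v^\star}=Q^Y_{v^\star}=Q_{v^\star}$. Write $q^X_v=|Q^X_v|$, $q^Y_v=|Q^Y_v|$. Projection schemes $h^X=(h^X_v)$, $h^X_v:Q^X_v\to\Sigma^X_v$, and $h^Y=(h^Y_v)$, $h^Y_v:Q^Y_v\to\Sigma^Y_v$, with $s^X_v=|\Sigma^X_v|$, $s^Y_v=|\Sigma^Y_v|$, satisfy the coupling projection condition if: (i) both are balanced: $\lfloor q^X_v/s^X_v\rfloor\le|(h^X_v)^{-1}(y)|\le\lceil q^X_v/s^X_v\rceil$ for all $v,y\in\Sigma^X_v$, and similarly for $Y$; (ii) $\Sigma^X_{v_0}=\Sigma^Y_{v_0}$ and $h^X_u=h^Y_u$ for all $u\ne v_0$; (iii) $h^X_{v^\star}=h^Y_{v^\star}=h_{v^\star}$; (iv) for every $c\in\mathcal{C}$, $\min\big(\sum_{v\in\mathrm{vbl}(c)}\log\lfloor q^X_v/s^X_v\rfloor,\sum_{v\in\mathrm{vbl}(c)}\log\lfloor q^Y_v/s^Y_v\rfloor\big)\ge\frac\beta{10}\sum_{v\in\mathrm{vbl}(c)}\log q_v$; (v) for every $c$ with $v^\star\notin\mathrm{vbl}(c)$, $\min\big(\sum_{v\in\mathrm{vbl}(c)}\log\frac{q^X_v}{\lceil q^X_v/s^X_v\rceil},\sum_{v\in\mathrm{vbl}(c)}\log\frac{q^Y_v}{\lceil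 q^Y_v/s^Y_v\rceil}\big)\ge\frac\beta{10}\sum_{v\in\mathrm{vbl}(c)}\log q_v$; (vi) for every $c$ with $v^\star\in\mathrm{vbl}(c)$, $\min_{Z\in\{X,Y\}}\big(\log\lfloor q^Z_{v^\star}/s^Z_{v^\star}\rfloor+\sum_{v\in\mathrm{vbl}(c)\setminus\{v^\star\}}\log\frac{q^Z_v}{\lceil q^Z_v/s^Z_v\rceil}\big)\ge\frac\beta{10}\sum_{v\in\mathrm{vbl}(c)}\log q_v$. $\log$ base 2. *)

theory Defs
  imports Complex_Main "HOL-Library.FuncSet"
begin

definition csp_formula ::
  "'v set \<Rightarrow> ('v \<Rightarrow> 'a set) \<Rightarrow> 'c set \<Rightarrow> ('c \<Rightarrow> 'v set) \<Rightarrow> ('c \<Rightarrow> ('v \<Rightarrow> 'a) \<Rightarrow> bool) \<Rightarrow> bool"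
  where "csp_formula V Q C vbl sat \<longleftrightarrow>
    finite V \<and> (\<forall>v\<in>V. finite (Q v) \<and> card (Q v) \<ge> 2) \<and> finite C \<and> (\<forall>c\<in>C. vbl c \<subseteq> V)"

definition atomic_constraints ::
  "('v \<Rightarrow> 'a set) \<Rightarrow> 'c set \<Rightarrow> ('c \<Rightarrow> 'v set) \<Rightarrow> ('c \<Rightarrow> ('v \<Rightarrow> 'a) \<Rightarrow> bool) \<Rightarrow> bool"
  where "atomic_constraints Q C vbl sat \<longleftrightarrow>
    (\<forall>c\<in>C. card {\<sigma> \<in> PiE (vbl c) Q. \<not> sat c \<sigma>} = 1)"

definition dep_degree :: "'c set \<Rightarrow> ('c \<Rightarrow> 'v set) \<Rightarrow> 'c \<Rightarrow> nat"
  where "dep_degree C vbl c = card {c' \<in> C. c' \<noteq> c \<and> vbl c \<inter> vbl c' \<noteq> {}}"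

definition max_degree :: "'c set \<Rightarrow> ('c \<Rightarrow> 'v set) \<Rightarrow> nat"
  where "max_degree C vbl = Max (dep_degree C vbl ` C)"

definition viol_prob :: "('v \<Rightarrow> 'a set) \<Rightarrow> 'c set \<Rightarrow> ('c \<Rightarrow> 'v set) \<Rightarrow> real"
  where "viol_prob Q C vbl = Max ((\<lambda>c. \<Prod>v\<in>vbl c. 1 / real (card (Q v))) ` C)"

definition proj_scheme :: "'v set \<Rightarrow> ('v \<Rightarrow> 'a set) \<Rightarrow> ('v \<Rightarrow> 's set) \<Rightarrow> ('v \<Rightarrow> 'a \<Rightarrow> 's) \<Rightarrow> bool"
  where "proj_scheme V Q \<Sigma> h \<longleftrightarrow> (\<forall>v\<in>V. finite (\<Sigma> v) \<and> (\<forall>x\<in>Q v. h v x \<in> \<Sigma> v))"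

definition flo :: "('v \<Rightarrow> 'a set) \<Rightarrow> ('v \<Rightarrow> 's set) \<Rightarrow> 'v \<Rightarrow> int"
  where "flo Q \<Sigma> v = \<lfloor>real (card (Q v)) / real (card (\<Sigma> v))\<rfloor>"

definition cei :: "('v \<Rightarrow> 'a set) \<Rightarrow> ('v \<Rightarrow> 's set) \<Rightarrow> 'v \<Rightarrow> int"
  where "cei Q \<Sigma> v = \<lceil>real (card (Q v)) / real (card (\<Sigma> v))\<rceil>"

definition balanced :: "'v set \<Rightarrow> ('v \<Rightarrow> 'a set) \<Rightarrow> ('v \<Rightarrow> 's set) \<Rightarrow> ('v \<Rightarrow> 'a \<Rightarrow> 's) \<Rightarrow> bool"
  where "balanced V Q \<Sigma> h \<longleftrightarrow> (\<forall>v\<in>V. \<forall>y\<in>\<Sigma> v.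
     flo Q \<Sigma> v \<le> int (card {x \<in> Q v. h v x = y}) \<and> int (card {x \<in> Q v. h v x = y}) \<le> cei Q \<Sigma> v)"

text \<open>With the paper's convention
log 0 = -infinity, the lower-bound inequality forces every floor(q_v/s_v), v in vbl c,
to be positive; this is made explicit since in Isabelle log 0 = 0.\<close>
definition entropy_criterion ::
  "'v set \<Rightarrow> ('v \<Rightarrow> 'a set) \<Rightarrow> 'c set \<Rightarrow> ('c \<Rightarrow> 'v set) \<Rightarrow> ('v \<Rightarrow> 's set) \<Rightarrow> ('v \<Rightarrow> 'a \<Rightarrow> 's)
    \<Rightarrow> real \<Rightarrow> real \<Rightarrow> bool"
  where "entropy_criterion V Q C vbl \<Sigma> h \<alpha> \<beta> \<longleftrightarrow> balanced V Q \<Sigma> h \<and>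
    (\<forall>c\<in>C.
      (\<Sum>v\<in>vbl c. log 2 (real_of_int (cei Q \<Sigma> v))) \<le> \<alpha> * (\<Sum>v\<in>vbl c. log 2 (real (card (Q v)))) \<and>
      (\<forall>v\<in>vbl c. flo Q \<Sigma> v \<ge> 1) \<and>
      (\<Sum>v\<in>vbl c. log 2 (real_of_int (flo Q \<Sigma> v))) \<ge> \<beta> * (\<Sum>v\<in>vbl c. log 2 (real (card (Q v)))))"

definition restr_dom :: "('v \<Rightarrow> 'a set) \<Rightarrow> ('v \<Rightarrow> 'a \<Rightarrow> 's) \<Rightarrow> ('v \<Rightarrow> 's) \<Rightarrow> 'v \<Rightarrow> 'v \<Rightarrow> 'a set"
  where "restr_dom Q h Z vs u = (if u = vs then Q u else {x \<in> Q u. h u x = Z u})"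

text \<open>Again log 0 = -infinity in the paper,
so condition (iv) forces the floors to be positive (made explicit); this also makes all
arguments of logarithms in (v),(vi) positive.\<close>
definition coupling_condition ::
  "'v set \<Rightarrow> ('v \<Rightarrow> 'a set) \<Rightarrow> 'c set \<Rightarrow> ('c \<Rightarrow> 'v set) \<Rightarrow> ('v \<Rightarrow> 's set) \<Rightarrow> ('v \<Rightarrow> 'a \<Rightarrow> 's)
    \<Rightarrow> real \<Rightarrow> 'v \<Rightarrow> 'v \<Rightarrow> ('v \<Rightarrow> 'a set) \<Rightarrow> ('v \<Rightarrow> 'a set)
    \<Rightarrow> ('v \<Rightarrow> 's set) \<Rightarrow> ('v \<Rightarrow> 'a \<Rightarrow> 's) \<Rightarrow> ('v \<Rightarrow> 's set) \<Rightarrow> ('v \<Rightarrow> 'a \<Rightarrow> 's) \<Rightarrow> bool"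
  where "coupling_condition V Q C vbl \<Sigma> h \<beta> v0 vs QX QY \<Sigma>X hX \<Sigma>Y hY \<longleftrightarrow>
    \<comment> \<open>(i)\<close>
    balanced V QX \<Sigma>X hX \<and> balanced V QY \<Sigma>Y hY \<and>
    \<comment> \<open>(ii)\<close>
    \<Sigma>X v0 = \<Sigma>Y v0 \<and>
    (\<forall>u\<in>V. u \<noteq> v0 \<longrightarrow> \<Sigma>X u = \<Sigma>Y u \<and> (\<forall>x\<in>QX u. hX u x = hY u x)) \<and>
    \<comment> \<open>(iii)\<close>
    \<Sigma>X vs = \<Sigma> vs \<and> \<Sigma>Y vs = \<Sigma> vs \<and> (\<forall>x\<in>Q vs. hX vs x = h vs x \<and> hY vs x = h vs x) \<and>
    \<comment> \<open>(iv)\<close>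
    (\<forall>c\<in>C. (\<forall>v\<in>vbl c. flo QX \<Sigma>X v \<ge> 1 \<and> flo QY \<Sigma>Y v \<ge> 1) \<and>
       min (\<Sum>v\<in>vbl c. log 2 (real_of_int (flo QX \<Sigma>X v)))
           (\<Sum>v\<in>vbl c. log 2 (real_of_int (flo QY \<Sigma>Y v)))
         \<ge> \<beta> / 10 * (\<Sum>v\<in>vbl c. log 2 (real (card (Q v))))) \<and>
    \<comment> \<open>(v)\<close>
    (\<forall>c\<in>C. vs \<notin> vbl c \<longrightarrow>
       min (\<Sum>v\<in>vbl c. log 2 (real (card (QX v)) / real_of_int (cei QX \<Sigma>X v)))
           (\<Sum>v\<in>vbl c. log 2 (real (card (QY v)) / real_of_int (cei QY \<Sigma>Y v)))
         \<ge> \<beta> / 10 * (\<Sum>v\<in>vbl c. log 2 (real (card (Q v))))) \<and>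
    \<comment> \<open>(vi)\<close>
    (\<forall>c\<in>C. vs \<in> vbl c \<longrightarrow>
       min (log 2 (real_of_int (flo QX \<Sigma>X vs)) +
              (\<Sum>v\<in>vbl c - {vs}. log 2 (real (card (QX v)) / real_of_int (cei QX \<Sigma>X v))))
           (log 2 (real_of_int (flo QY \<Sigma>Y vs)) +
              (\<Sum>v\<in>vbl c - {vs}. log 2 (real (card (QY v)) / real_of_int (cei QY \<Sigma>Y v))))
         \<ge> \<beta> / 10 * (\<Sum>v\<in>vbl c. log 2 (real (card (Q v)))))"

end

theory Submission
  imports Defs "HOL-Library.Discrete_Functions"
begin

text \<open>
  Every variable other than \<open>v*\<close> gets a fresh alphabet of size \<open>s_u\<close> and a balanced
  map of its restricted domain onto it; the maps for \<open>X\<close> and \<open>Y\<close> are the same wherever the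
  two domains agree, i.e. away from \<open>v0\<close>.  A domain of size \<open>q \<ge> 4\<close> is cut into
  \<open>s = floor (sqrt q)\<close> symbols, so that both \<open>floor (q / s)\<close> and \<open>q / ceil (q / s)\<close> are
  at least \<open>2 s / 3 \<ge> q powr (1/8)\<close>.  A domain with two or three values cannot be cut like
  that: such a variable either keeps its whole domain in one fibre (one bit for the floor
  sums, none for the ceiling sums) or is projected injectively (the reverse).  A counting
  version of the Lovasz Local Lemma, with a Chernoff bound for each constraint, chooses this
  split so that every constraint gets at least a third of its small variables on each side,
  up to \<open>log D + 3\<close>.  Each of the sums in (iv)-(vi) then retains an eighth of the entropy
  guaranteed by the criterion, minus \<open>log D + 3 + 1/4\<close>, and the hypothesis on \<open>p\<close> makes this
  at least a tenth.
\<close>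

section \<open>Balanced maps onto an initial segment\<close>

lemma card_residue_class_bounds:
  fixes m s y :: nat
  assumes "y < s"
  defines "n \<equiv> card {i. i < m \<and> i mod s = y}"
  shows "\<lfloor>real m / real s\<rfloor> \<le> int n" and "int n \<le> \<lceil>real m / real s\<rceil>"
proof -
  have "(\<lambda>q. q * s + y) ` {..<m div s} \<subseteq> {i. i < m \<and> i mod s = y}"
  proof clarify
    fix q assume "q < m div s"
    then have "Suc q * s \<le> m div s * s"
      by (intro mult_right_mono) auto
    then have "q * s + y < m div s * s"
      using assms by simp
    then show "q * s + y < m \<and> (q * s + y) mod s = y"
      using assms by (simp add: order.strict_trans2 div_times_less_eq_dividend)
  qed
  then have "card ((\<lambda>q. q * s + y) ` {..<m div s}) \<le> n"
    unfolding n_def by (intro card_mono) auto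
  moreover have "card ((\<lambda>q. q * s + y) ` {..<m div s}) = m div s"
    using assms by (subst card_image) (auto intro: inj_onI)
  ultimately show "\<lfloor>real m / real s\<rfloor> \<le> int n"
    by (simp add: floor_divide_of_nat_eq)
  have "{i. i < m \<and> i mod s = y} \<subseteq> (\<lambda>q. q * s + y) ` {..<nat \<lceil>real m / real s\<rceil>}"
  proof clarify
    fix i assume i: "i < m" "y = i mod s"
    have "real (i div s) * real s < real m"
      using i by (metis div_times_less_eq_dividend le_less_trans of_nat_less_iff of_nat_mult)
    then have "real (i div s) < real m / real s"
      using assms by (simp add: pos_less_divide_eq)
    then have "i div s < nat \<lceil>real m / real s\<rceil>"
      by (simp add: zless_nat_eq_int_zless less_ceiling_iff)
    then show "i \<in> (\<lambda>q. q * s + i mod s) ` {..<nat \<lceil>real m / real s\<rceil>}"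
      by (intro image_eqI[of _ _ "i div s"]) auto
  qed
  then have "n \<le> card ((\<lambda>q. q * s + y) ` {..<nat \<lceil>real m / real s\<rceil>})"
    unfolding n_def by (intro card_mono) auto
  also have "\<dots> \<le> nat \<lceil>real m / real s\<rceil>"
    using card_image_le[of "{..<nat \<lceil>real m / real s\<rceil>}"] by simp
  finally show "int n \<le> \<lceil>real m / real s\<rceil>"
    by (metis le_nat_iff ceiling_mono ceiling_zero divide_nonneg_nonneg of_nat_0_le_iff)
qed

definition balanced_onto :: "'a set \<Rightarrow> nat \<Rightarrow> ('a \<Rightarrow> nat) \<Rightarrow> bool" where
  "balanced_onto A s g \<longleftrightarrow> (\<forall>x\<in>A. g x < s) \<and>
     (\<forall>y<s. \<lfloor>real (card A) / real s\<rfloor> \<le> int (card {x\<in>A. g x = y}) \<and>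
            int (card {x\<in>A. g x = y}) \<le> \<lceil>real (card A) / real s\<rceil>)"

lemma balanced_onto_exists:
  assumes "finite A" "0 < s"
  shows "\<exists>g. balanced_onto A s g"
proof -
  obtain e where e: "bij_betw e A {0..<card A}"
    using ex_bij_betw_finite_nat[OF assms(1)] by blast
  have "card {x\<in>A. e x mod s = y} = card {i. i < card A \<and> i mod s = y}" for y
  proof -
    have "{i. i < card A \<and> i mod s = y} = {i\<in>{0..<card A}. i mod s = y}"
      by auto
    moreover have "bij_betw e {x\<in>A. e x mod s = y} {i\<in>{0..<card A}. i mod s = y}"
      by (rule bij_betw_Collect[OF e]) simp
    ultimately show ?thesis by (simp add: bij_betw_same_card)
  qed
  then have "balanced_onto A s (\<lambda>x. e x mod s)"
    unfolding balanced_onto_def using assms(2) card_residue_class_bounds[of _ s "card A"] by simp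
  then show ?thesis by blast
qed

definition balanced_map :: "'a set \<Rightarrow> nat \<Rightarrow> 'a \<Rightarrow> nat" where
  "balanced_map A s = (SOME g. balanced_onto A s g)"

lemma balanced_onto_balanced_map:
  assumes "finite A" "0 < s"
  shows "balanced_onto A s (balanced_map A s)"
  unfolding balanced_map_def using balanced_onto_exists[OF assms] by (rule someI_ex)

lemma le_two_thirds_floor_sqrt_power8:
  fixes k :: nat
  assumes "4 \<le> k"
  defines "t \<equiv> 2 * real (floor_sqrt k) / 3"
  shows "real k \<le> t ^ 8"
proof -
  define s where "s = real (floor_sqrt k)"
  have s2: "2 \<le> s"
    using assms(1) by (simp add: s_def le_floor_sqrtI)
  have "real k < (s + 1)\<^sup>2"
    using Suc_floor_sqrt_power2_gt[of k] unfolding s_def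
    by (metis Suc_eq_plus1 of_nat_1 of_nat_add of_nat_less_iff of_nat_power)
  also have "\<dots> \<le> (3 / 2 * s)\<^sup>2"
    using s2 by (intro power_mono) auto
  also have "\<dots> = 9 / 4 * s\<^sup>2"
    by (simp add: power2_eq_square)
  also have "\<dots> \<le> (4 / 3) ^ 6 * (4 / 9) * s\<^sup>2"
    by (intro mult_right_mono) (auto simp: power_divide)
  also have "\<dots> \<le> t ^ 6 * (4 / 9) * s\<^sup>2"
    using s2 unfolding t_def s_def by (intro mult_right_mono power_mono) auto
  also have "\<dots> = t ^ 6 * t\<^sup>2"
    unfolding t_def s_def by (simp add: power2_eq_square)
  also have "\<dots> = t ^ 8"
    by (simp flip: power_add)
  finally show ?thesis by simp
qed

text \<open>Both \<open>floor (m / s)\<close> and \<open>m / ceil (m / s)\<close> are at least \<open>2 s / 3\<close>.\<close>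
lemma log_floor_sqrt_div_bounds:
  fixes k m :: nat
  assumes "4 \<le> k" "k \<le> m"
  defines "s \<equiv> floor_sqrt k"
  shows "1 \<le> \<lfloor>real m / real s\<rfloor>"
    and "log 2 k / 8 \<le> log 2 \<lfloor>real m / real s\<rfloor>"
    and "log 2 k / 8 \<le> log 2 (real m / \<lceil>real m / real s\<rceil>)"
proof -
  define t where "t = 2 * real s / 3"
  have s2: "2 \<le> real s"
    using assms(1) by (simp add: s_def le_floor_sqrtI)
  have "s\<^sup>2 \<le> m"
    using assms(2) floor_sqrt_power2_le[of k] unfolding s_def by linarith
  then have s_le: "real s \<le> real m / real s"
    using s2 by (simp add: field_simps power2_eq_square flip: of_nat_mult)
  have log_le: "log 2 k / 8 \<le> log 2 x" if "t \<le> x" for x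
  proof -
    have "log 2 k \<le> log 2 (t ^ 8)"
      using le_two_thirds_floor_sqrt_power8[OF assms(1)] assms(1) unfolding t_def s_def
      by (intro log_mono) auto
    also have "\<dots> \<le> 8 * log 2 x"
      using s2 that unfolding t_def by (simp add: log_nat_power)
    finally show ?thesis by simp
  qed
  have "int s \<le> \<lfloor>real m / real s\<rfloor>"
    using s_le by (simp add: le_floor_iff)
  then have floor_ge: "real s \<le> \<lfloor>real m / real s\<rfloor>"
    by linarith
  then show "1 \<le> \<lfloor>real m / real s\<rfloor>"
    using s2 by linarith
  show "log 2 k / 8 \<le> log 2 \<lfloor>real m / real s\<rfloor>"
    using floor_ge s2 by (intro log_le) (simp add: t_def)
  have "real_of_int \<lceil>real m / real s\<rceil> < real m / real s + 1"
    by linarith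
  also have "\<dots> \<le> 3 / 2 * (real m / real s)"
    using s_le s2 by simp
  finally have "t * \<lceil>real m / real s\<rceil> \<le> real m"
    using s2 unfolding t_def by (simp add: field_simps)
  moreover have "0 < real_of_int \<lceil>real m / real s\<rceil>"
    using s_le s2 by simp
  ultimately show "log 2 k / 8 \<le> log 2 (real m / \<lceil>real m / real s\<rceil>)"
    by (intro log_le) (simp add: field_simps)
qed

lemma log_prod:
  assumes "finite A" "\<forall>x\<in>A. 0 < f x"
  shows "log b (\<Prod>x\<in>A. f x) = (\<Sum>x\<in>A. log b (f x))"
  using assms by (induction A rule: finite_induct) (auto simp: log_mult_pos prod_pos)

lemma log_inverse_viol_prob_le:
  assumes "finite C" "c \<in> C" "finite (vbl c)" "\<forall>v\<in>vbl c. 0 < card (Q v)"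
  shows "log 2 (1 / viol_prob Q C vbl) \<le> (\<Sum>v\<in>vbl c. log 2 (real (card (Q v))))"
proof -
  define pc where "pc = (\<Prod>v\<in>vbl c. 1 / real (card (Q v)))"
  have pc_pos: "0 < pc"
    unfolding pc_def using assms(4) by (intro prod_pos) auto
  have "pc \<le> viol_prob Q C vbl"
    unfolding viol_prob_def pc_def using assms(1,2) by (intro Max_ge) auto
  then have "log 2 (1 / viol_prob Q C vbl) \<le> log 2 (1 / pc)"
    using pc_pos by (intro log_mono divide_left_mono) auto
  also have "1 / pc = (\<Prod>v\<in>vbl c. real (card (Q v)))"
    unfolding pc_def by (simp add: prod_dividef)
  also have "log 2 \<dots> = (\<Sum>v\<in>vbl c. log 2 (real (card (Q v))))"
    using assms(3,4) by (intro log_prod) auto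
  finally show ?thesis .
qed

text \<open>With Isabelle's convention \<open>log 2 0 = 0\<close> this also covers \<open>D = 0\<close>.\<close>
lemma lll_parameter_bounds:
  fixes D :: nat
  defines "r \<equiv> log 2 (real D) + 3"
  shows "4 * 2 powr (1 - r) * D \<le> 1" and "2 powr (1 - r) < 1 / 2" and "3 \<le> r"
proof -
  show "3 \<le> r"
    unfolding r_def by (cases "D = 0") (auto simp: log_def)
  then have "2 powr (1 - r) \<le> 2 powr (-2)"
    by (intro powr_mono) auto
  then show "2 powr (1 - r) < 1 / 2"
    by (simp add: powr_minus_divide)
  show "4 * 2 powr (1 - r) * D \<le> 1"
  proof (cases "D = 0")
    case False
    then have "2 powr (1 - r) = 1 / (4 * real D)"
      unfolding r_def by (simp add: powr_diff powr_add powr_minus_divide)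
    with False show ?thesis by simp
  qed simp
qed

lemma sum_indicator_split_lower_bound:
  fixes w :: "'a \<Rightarrow> real"
  assumes "finite W" "\<forall>v\<in>W \<inter> S. w v \<le> 8 / 3"
    and "real (card (W \<inter> S)) / 3 - r \<le> real (card (W \<inter> S \<inter> T))"
  shows "(\<Sum>v\<in>W. w v) / 8 - r - 1 / 4
    \<le> (\<Sum>v\<in>W. if v \<in> S then of_bool (v \<in> T) else w v / 8 - (if v = a then 1 / 4 else 0))"
proof -
  have "(\<Sum>v\<in>W. w v) / 8 = (\<Sum>v\<in>W. w v / 8)"
    by (simp add: sum_divide_distrib)
  also have "\<dots> = (\<Sum>v\<in>W \<inter> S. w v / 8) + (\<Sum>v\<in>W - S. w v / 8)"
    using assms(1) by (rule sum.Int_Diff)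
  finally have "(\<Sum>v\<in>W. w v) / 8 = (\<Sum>v\<in>W \<inter> S. w v / 8) + (\<Sum>v\<in>W - S. w v / 8)" .
  moreover have "(\<Sum>v\<in>W \<inter> S. w v / 8) \<le> real (card (W \<inter> S)) / 3"
    using sum_mono[of "W \<inter> S" "\<lambda>v. w v / 8" "\<lambda>_. 1 / 3"] assms(2) by simp
  moreover have "(\<Sum>v\<in>W - S. if v = a then 1 / 4 else 0) \<le> (1 / 4 :: real)"
    using assms(1) by (simp add: sum.delta)
  moreover have "(\<Sum>v\<in>W. if v \<in> S then of_bool (v \<in> T) else w v / 8 - (if v = a then 1 / 4 else 0))
      = real (card (W \<inter> S \<inter> T)) + ((\<Sum>v\<in>W - S. w v / 8) - (\<Sum>v\<in>W - S. if v = a then 1 / 4 else 0))"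
    using assms(1) by (simp add: sum.Int_Diff[of W _ S] sum_subtractf Int_def conj_commute)
  ultimately show ?thesis
    using assms(3) by linarith
qed

lemma entropy_tenth_arith:
  fixes \<beta> r G L x :: real
  assumes "0 < \<beta>" "3 \<le> r" "\<beta> * L \<le> G" "55 / \<beta> * r \<le> L" "G / 8 - r - 1 / 4 \<le> x"
  shows "\<beta> / 10 * L \<le> x"
proof -
  have "55 * r \<le> \<beta> * L"
    using mult_left_mono[OF assms(4), of \<beta>] assms(1) by simp
  then show ?thesis
    using assms(2,3,5) by linarith
qed

section \<open>Counting subsets\<close>

lemma sum_Pow_power_card:
  fixes x :: "'b :: comm_semiring_1"
  assumes "finite A"
  shows "(\<Sum>X\<in>Pow A. x ^ card X) = (x + 1) ^ card A"
  using prod_add[OF assms, of "\<lambda>_. x" "\<lambda>_. 1"] by simp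

lemma card_Pow_split:
  assumes "B \<subseteq> S"
  shows "card {T \<in> Pow S. f (T \<inter> B) \<and> g (T - B)} = card {X \<in> Pow B. f X} * card {Y \<in> Pow (S - B). g Y}"
proof -
  have "bij_betw (\<lambda>T. (T \<inter> B, T - B)) {T \<in> Pow S. f (T \<inter> B) \<and> g (T - B)}
      ({X \<in> Pow B. f X} \<times> {Y \<in> Pow (S - B). g Y})"
  proof (rule bij_betw_byWitness[where f' = "\<lambda>(X, Y). X \<union> Y"])
    have "(X \<union> Y) \<inter> B = X" "(X \<union> Y) - B = Y" if "X \<subseteq> B" "Y \<subseteq> S - B" for X Y
      using that by auto
    then show "(\<lambda>(X, Y). X \<union> Y) ` ({X \<in> Pow B. f X} \<times> {Y \<in> Pow (S - B). g Y})
        \<subseteq> {T \<in> Pow S. f (T \<inter> B) \<and> g (T - B)}"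
      using assms by auto
  qed auto
  then show ?thesis
    by (simp add: bij_betw_same_card card_cartesian_product)
qed

text \<open>An exponential-moment (Chernoff) bound with weight \<open>2 ^ - card X\<close>.\<close>
lemma card_small_subsets_le:
  assumes "finite A"
  shows "real (card {X \<in> Pow A. real (card X) < real (card A) / 3 - r}) \<le> 2 powr (- r) * 2 ^ card A"
proof -
  define n where "n = card A"
  define t where "t = real n / 3 - r"
  define B where "B = {X \<in> Pow A. real (card X) < t}"
  have "real (card B) * 2 powr (- t) = (\<Sum>X\<in>B. 2 powr (- t))"
    by simp
  also have "\<dots> \<le> (\<Sum>X\<in>B. (1 / 2) ^ card X)"
  proof (rule sum_mono)
    fix X assume "X \<in> B"
    then have "2 powr (- t) \<le> 2 powr (- real (card X))"
      unfolding B_def by (intro powr_mono) auto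
    then show "2 powr (- t) \<le> (1 / 2) ^ card X"
      by (simp add: powr_minus powr_realpow power_one_over inverse_eq_divide)
  qed
  also have "\<dots> \<le> (\<Sum>X\<in>Pow A. (1 / 2) ^ card X)"
    using assms unfolding B_def by (intro sum_mono2) auto
  also have "\<dots> = (3 / 2) ^ n"
    unfolding n_def using sum_Pow_power_card[OF assms, of "1 / 2 :: real"] by simp
  finally have "real (card B) \<le> (3 / 2) ^ n * 2 powr t"
    by (simp add: powr_minus field_simps)
  also have "2 powr t = 2 powr (- r) * (2 powr (1 / 3)) ^ n"
    unfolding t_def by (subst powr_realpow[symmetric]) (auto simp: powr_powr powr_add[symmetric])
  also have "(3 / 2) ^ n * (2 powr (- r) * (2 powr (1 / 3)) ^ n) = 2 powr (- r) * ((3 / 2) * 2 powr (1 / 3)) ^ n"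
    by (simp only: power_mult_distrib mult_ac)
  also have "\<dots> \<le> 2 powr (- r) * 2 ^ n"
  proof -
    have "(2 powr (1 / 3)) ^ 3 = (2 :: real)"
      by (simp add: powr_realpow[symmetric] powr_powr)
    also have "\<dots> \<le> (4 / 3) ^ 3"
      by (simp add: power_divide)
    finally have "2 powr (1 / 3) \<le> (4 / 3 :: real)"
      by (rule power_le_imp_le_base[where n = 2, simplified]) simp
    then show ?thesis
      by (intro mult_left_mono power_mono) auto
  qed
  finally show ?thesis
    unfolding B_def t_def n_def .
qed

lemma card_unbalanced_subsets_le:
  assumes "finite A"
  shows "real (card {X \<in> Pow A. real (card X) < real (card A) / 3 - r \<or>
                               real (card (A - X)) < real (card A) / 3 - r})
    \<le> 2 powr (1 - r) * 2 ^ card A"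
proof -
  define t where "t = real (card A) / 3 - r"
  define B1 where "B1 = {X \<in> Pow A. real (card X) < t}"
  define B2 where "B2 = {X \<in> Pow A. real (card (A - X)) < t}"
  have "B2 \<subseteq> (\<lambda>X. A - X) ` B1"
  proof
    fix X assume "X \<in> B2"
    then have "A - X \<in> B1" "X = A - (A - X)"
      unfolding B1_def B2_def by auto
    then show "X \<in> (\<lambda>X. A - X) ` B1" by blast
  qed
  have "finite B1"
    using assms unfolding B1_def by simp
  have "card B2 \<le> card ((\<lambda>X. A - X) ` B1)"
    using \<open>B2 \<subseteq> _\<close> \<open>finite B1\<close> by (intro card_mono) auto
  also have "\<dots> \<le> card B1"
    using \<open>finite B1\<close> by (rule card_image_le)
  finally have "card (B1 \<union> B2) \<le> 2 * card B1"
    using card_Un_le[of B1 B2] by linarith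
  moreover have "{X \<in> Pow A. real (card X) < t \<or> real (card (A - X)) < t} = B1 \<union> B2"
    unfolding B1_def B2_def by auto
  ultimately have "real (card {X \<in> Pow A. real (card X) < t \<or> real (card (A - X)) < t}) \<le> 2 * real (card B1)"
    by (metis of_nat_le_iff of_nat_mult of_nat_numeral)
  also have "\<dots> \<le> 2 * (2 powr (- r) * 2 ^ card A)"
    using card_small_subsets_le[OF assms, of r] unfolding B1_def t_def by simp
  finally show ?thesis
    unfolding t_def by (simp add: powr_diff powr_minus_divide)
qed

section \<open>A counting version of the Lovasz Local Lemma\<close>

text \<open>Probabilities are counted: the sample space is \<open>Pow S\<close> with the uniform distribution,
  and the bad event \<open>i\<close> depends only on the trace \<open>T \<inter> A i\<close>.\<close>
locale subset_local_lemma =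
  fixes S :: "'a set" and I :: "'i set" and A :: "'i \<Rightarrow> 'a set"
    and bad :: "'i \<Rightarrow> 'a set \<Rightarrow> bool" and p :: real and d :: nat
  assumes finite_S: "finite S" and finite_I: "finite I"
    and A_subset: "i \<in> I \<Longrightarrow> A i \<subseteq> S"
    and card_bad: "i \<in> I \<Longrightarrow> real (card {Z \<in> Pow (A i). bad i Z}) \<le> p * 2 ^ card (A i)"
    and degree: "i \<in> I \<Longrightarrow> card {j\<in>I. j \<noteq> i \<and> A i \<inter> A j \<noteq> {}} \<le> d"
    and p_nonneg: "0 \<le> p" and p_less: "p < 1 / 2" and p_degree: "4 * p * d \<le> 1"
begin

definition hits :: "'i \<Rightarrow> 'a set set" where
  "hits i = {T \<in> Pow S. bad i (T \<inter> A i)}"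

definition avoiding :: "'i set \<Rightarrow> 'a set set" where
  "avoiding F = {T \<in> Pow S. \<forall>j\<in>F. \<not> bad j (T \<inter> A j)}"

lemma finite_avoiding: "finite (avoiding F)"
  using finite_S unfolding avoiding_def by simp

lemma avoiding_Un: "avoiding (F \<union> G) = avoiding F - (\<Union>j\<in>G. hits j)"
  unfolding avoiding_def hits_def by auto

lemma avoiding_antimono: "F \<subseteq> G \<Longrightarrow> avoiding G \<subseteq> avoiding F"
  unfolding avoiding_def by auto

text \<open>Whether \<open>T\<close> hits \<open>i\<close> depends only on \<open>T \<inter> A i\<close>, and whether it avoids \<open>F\<close>
  only on \<open>T - A i\<close>: the two conditions are independent.\<close>
lemma card_hits_avoiding_disjoint:
  assumes "i \<in> I" "\<forall>j\<in>F. A j \<inter> A i = {}"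
  shows "real (card (hits i \<inter> avoiding F)) \<le> p * card (avoiding F)"
proof -
  define g where "g Y \<longleftrightarrow> (\<forall>j\<in>F. \<not> bad j (Y \<inter> A j))" for Y
  have g_diff: "g (T - A i) \<longleftrightarrow> (\<forall>j\<in>F. \<not> bad j (T \<inter> A j))" for T
  proof -
    have "(T - A i) \<inter> A j = T \<inter> A j" if "j \<in> F" for j
      using assms(2) that by blast
    then show ?thesis unfolding g_def by simp
  qed
  have A_S: "A i \<subseteq> S"
    using A_subset assms(1) .
  define N where "N = card {Y \<in> Pow (S - A i). g Y}"
  have "hits i \<inter> avoiding F = {T \<in> Pow S. bad i (T \<inter> A i) \<and> g (T - A i)}"
    unfolding hits_def avoiding_def g_diff by auto
  then have hits: "card (hits i \<inter> avoiding F) = card {Z \<in> Pow (A i). bad i Z} * N"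
    unfolding N_def using card_Pow_split[OF A_S] by simp
  have "avoiding F = {T \<in> Pow S. True \<and> g (T - A i)}"
    unfolding avoiding_def g_diff by auto
  then have "card (avoiding F) = card {Z \<in> Pow (A i). True} * N"
    unfolding N_def using card_Pow_split[OF A_S, of "\<lambda>_. True"] by simp
  also have "{Z \<in> Pow (A i). True} = Pow (A i)"
    by blast
  finally have "card (avoiding F) = 2 ^ card (A i) * N"
    using finite_subset[OF A_S finite_S] by (simp add: card_Pow)
  with hits show ?thesis
    using mult_right_mono[OF card_bad[OF assms(1)], of N] by simp
qed

text \<open>The usual invariant of the Local Lemma: conditioned on avoiding \<open>F\<close>, every
  other bad event has probability at most \<open>2 p\<close>.\<close>
definition lll_invariant :: "'i set \<Rightarrow> bool" where
  "lll_invariant F \<longleftrightarrow> 0 < card (avoiding F) \<and>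
     (\<forall>i\<in>I - F. real (card (hits i \<inter> avoiding F)) \<le> 2 * p * card (avoiding F))"

lemma card_avoiding_Un:
  "real (card (avoiding (F \<union> G))) = card (avoiding F) - card (avoiding F \<inter> (\<Union>j\<in>G. hits j))"
  unfolding avoiding_Un using finite_avoiding
  by (simp add: card_Diff_subset_Int of_nat_diff card_mono)

lemma card_avoiding_pos_step:
  assumes "F \<subseteq> I" "j \<in> F" "lll_invariant (F - {j})"
  shows "0 < card (avoiding F)"
proof -
  define c where "c = card (avoiding (F - {j}))"
  have "0 < c" "j \<in> I - (F - {j})"
    using assms unfolding lll_invariant_def c_def by auto
  then have "real (card (avoiding (F - {j}) \<inter> hits j)) \<le> 2 * p * c"
    using assms(3) unfolding lll_invariant_def c_def by (simp add: Int_commute)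
  also have "\<dots> < c"
    using mult_strict_right_mono[of "2 * p" 1 "real c"] p_less \<open>0 < c\<close> by simp
  finally show ?thesis
    using card_avoiding_Un[of "F - {j}" "{j}"] assms(2) unfolding c_def
    by (simp add: insert_absorb)
qed

lemma card_avoiding_Un_ge_half:
  assumes "lll_invariant F" "G \<subseteq> I - F" "card G \<le> d"
  shows "card (avoiding F) \<le> 2 * real (card (avoiding (F \<union> G)))"
proof -
  define c where "c = card (avoiding F)"
  have "finite G"
    using assms(2) finite_I finite_subset by blast
  have "avoiding F \<inter> (\<Union>j\<in>G. hits j) = (\<Union>j\<in>G. hits j \<inter> avoiding F)"
    by blast
  then have "card (avoiding F \<inter> (\<Union>j\<in>G. hits j)) \<le> (\<Sum>j\<in>G. card (hits j \<inter> avoiding F))"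
    using card_UN_le[OF \<open>finite G\<close>, of "\<lambda>j. hits j \<inter> avoiding F"] by simp
  then have "real (card (avoiding F \<inter> (\<Union>j\<in>G. hits j))) \<le> (\<Sum>j\<in>G. real (card (hits j \<inter> avoiding F)))"
    by (metis of_nat_le_iff of_nat_sum)
  also have "\<dots> \<le> (\<Sum>j\<in>G. 2 * p * c)"
    using assms(1,2) unfolding lll_invariant_def c_def by (intro sum_mono) auto
  also have "\<dots> \<le> d * (2 * p) * c"
    using assms(3) p_nonneg by (simp add: mult_right_mono)
  also have "\<dots> = 4 * p * d * c / 2"
    by (simp add: algebra_simps)
  also have "\<dots> \<le> c / 2"
    using mult_right_mono[OF p_degree, of "real c"] by (simp add: mult_ac)
  finally show ?thesis
    using card_avoiding_Un[of F G] unfolding c_def by simp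
qed

lemma card_hits_avoiding_step:
  assumes "F \<subseteq> I" "i \<in> I - F" "\<forall>F'\<subset>F. lll_invariant F'"
  shows "real (card (hits i \<inter> avoiding F)) \<le> 2 * p * card (avoiding F)"
proof (cases "\<forall>j\<in>F. A j \<inter> A i = {}")
  case True
  then have "real (card (hits i \<inter> avoiding F)) \<le> p * card (avoiding F)"
    using card_hits_avoiding_disjoint assms(2) by blast
  also have "\<dots> \<le> 2 * p * card (avoiding F)"
    using p_nonneg by (intro mult_right_mono) auto
  finally show ?thesis .
next
  case False
  define F1 where "F1 = {j\<in>F. A j \<inter> A i \<noteq> {}}"
  define F2 where "F2 = F - F1"
  have "F2 \<subset> F" "F2 \<union> F1 = F" "F1 \<subseteq> I - F2"
    using False assms(1) unfolding F2_def F1_def by auto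
  have "F1 \<subseteq> {j\<in>I. j \<noteq> i \<and> A i \<inter> A j \<noteq> {}}"
    using assms(1,2) unfolding F1_def by auto
  then have "card F1 \<le> card {j\<in>I. j \<noteq> i \<and> A i \<inter> A j \<noteq> {}}"
    using finite_I by (intro card_mono) auto
  also have "\<dots> \<le> d"
    using degree assms(2) by blast
  finally have half: "card (avoiding F2) \<le> 2 * real (card (avoiding F))"
    using card_avoiding_Un_ge_half[of F2 F1] assms(3) \<open>F2 \<subset> F\<close> \<open>F2 \<union> F1 = F\<close> \<open>F1 \<subseteq> I - F2\<close>
    by auto
  have "card (hits i \<inter> avoiding F) \<le> card (hits i \<inter> avoiding F2)"
    using avoiding_antimono[of F2 F] \<open>F2 \<subset> F\<close> finite_avoiding by (intro card_mono) auto
  also have "real (card (hits i \<inter> avoiding F2)) \<le> p * card (avoiding F2)"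
    using assms(2) by (intro card_hits_avoiding_disjoint) (auto simp: F2_def F1_def)
  also have "\<dots> \<le> p * (2 * real (card (avoiding F)))"
    using half p_nonneg by (intro mult_left_mono)
  finally show ?thesis
    by simp
qed

lemma lll_invariant_holds:
  assumes "F \<subseteq> I"
  shows "lll_invariant F"
proof -
  have "finite F"
    using assms finite_I finite_subset by blast
  then show ?thesis
    using assms
  proof (induction F rule: finite_psubset_induct)
    case (psubset F)
    then have IH: "\<forall>F'\<subset>F. lll_invariant F'"
      by blast
    have "0 < card (avoiding F)"
    proof (cases "F = {}")
      case True
      then show ?thesis
        using finite_S unfolding avoiding_def by (simp add: card_Pow flip: Pow_def)
    next
      case False
      then obtain j where "j \<in> F"
        by blast
      then show ?thesis
        using card_avoiding_pos_step IH psubset.prems by blast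
    qed
    then show ?case
      unfolding lll_invariant_def using card_hits_avoiding_step psubset.prems IH by blast
  qed
qed

theorem exists_avoiding: "\<exists>T\<subseteq>S. \<forall>i\<in>I. \<not> bad i (T \<inter> A i)"
proof -
  have "avoiding I \<noteq> {}"
    using lll_invariant_holds[of I] unfolding lll_invariant_def by auto
  then show ?thesis
    unfolding avoiding_def by auto
qed

end

section \<open>The coupled projection schemes\<close>

lemma card_restricted_neighbours_le_max_degree:
  assumes "finite C" "c \<in> C" "\<forall>c\<in>C. B c \<subseteq> vbl c"
  shows "card {j\<in>C. j \<noteq> c \<and> B c \<inter> B j \<noteq> {}} \<le> max_degree C vbl"
proof -
  have "{j\<in>C. j \<noteq> c \<and> B c \<inter> B j \<noteq> {}} \<subseteq> {c'\<in>C. c' \<noteq> c \<and> vbl c \<inter> vbl c' \<noteq> {}}"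
    using assms(2,3) by blast
  then have "card {j\<in>C. j \<noteq> c \<and> B c \<inter> B j \<noteq> {}} \<le> dep_degree C vbl c"
    unfolding dep_degree_def using assms(1) by (intro card_mono) auto
  also have "\<dots> \<le> max_degree C vbl"
    unfolding max_degree_def using assms(1,2) by (intro Max_ge) auto
  finally show ?thesis .
qed

locale coupling_setting =
  fixes V :: "'v set" and Q :: "'v \<Rightarrow> 'a set" and C :: "'c set"
    and vbl :: "'c \<Rightarrow> 'v set" and sat :: "'c \<Rightarrow> ('v \<Rightarrow> 'a) \<Rightarrow> bool"
    and \<Sigma> :: "'v \<Rightarrow> nat set" and h :: "'v \<Rightarrow> 'a \<Rightarrow> nat"
    and \<alpha> \<beta> :: real and X Y :: "'v \<Rightarrow> nat" and v0 vs :: 'v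
  assumes csp: "csp_formula V Q C vbl sat"
    and proj: "proj_scheme V Q \<Sigma> h"
    and entropy: "entropy_criterion V Q C vbl \<Sigma> h \<alpha> \<beta>"
    and beta_pos: "0 < \<beta>"
    and X_in: "\<forall>v\<in>V. X v \<in> \<Sigma> v" and Y_in: "\<forall>v\<in>V. Y v \<in> \<Sigma> v"
    and XY_agree: "\<forall>v\<in>V. v \<noteq> v0 \<longrightarrow> X v = Y v"
    and vs_ne_v0: "vs \<noteq> v0"
    and strong: "55 / \<beta> * (log 2 (real (max_degree C vbl)) + 3) \<le> log 2 (1 / viol_prob Q C vbl)"
begin

lemma csp_facts:
  shows finite_V: "finite V" and finite_C: "finite C" and finite_Q: "v \<in> V \<Longrightarrow> finite (Q v)"
    and card_Q: "v \<in> V \<Longrightarrow> 2 \<le> card (Q v)" and vbl_subset: "c \<in> C \<Longrightarrow> vbl c \<subseteq> V"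
  using csp unfolding csp_formula_def by auto

lemma finite_vbl: "c \<in> C \<Longrightarrow> finite (vbl c)"
  using finite_V vbl_subset finite_subset by blast

lemma entropy_facts:
  shows balanced_h: "balanced V Q \<Sigma> h"
    and flo_pos: "c \<in> C \<Longrightarrow> v \<in> vbl c \<Longrightarrow> 1 \<le> flo Q \<Sigma> v"
    and flo_entropy: "c \<in> C \<Longrightarrow> \<beta> * (\<Sum>v\<in>vbl c. log 2 (real (card (Q v))))
                                   \<le> (\<Sum>v\<in>vbl c. log 2 (real_of_int (flo Q \<Sigma> v)))"
  using entropy unfolding entropy_criterion_def by auto

abbreviation Q_of :: "('v \<Rightarrow> nat) \<Rightarrow> 'v \<Rightarrow> 'a set" where
  "Q_of Z \<equiv> restr_dom Q h Z vs"

lemma Q_of_vs [simp]: "Q_of Z vs = Q vs"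
  by (simp add: restr_dom_def)

lemma finite_Q_of: "u \<in> V \<Longrightarrow> finite (Q_of Z u)"
  using finite_Q by (auto simp: restr_dom_def)

lemma Q_of_X_eq_Y: "u \<in> V \<Longrightarrow> u \<noteq> v0 \<Longrightarrow> Q_of X u = Q_of Y u"
  using XY_agree by (simp add: restr_dom_def)

lemma flo_le_card_Q_of:
  assumes "\<forall>v\<in>V. Z v \<in> \<Sigma> v" "u \<in> V" "u \<noteq> vs"
  shows "flo Q \<Sigma> u \<le> int (card (Q_of Z u))"
  using balanced_h assms unfolding balanced_def restr_dom_def by auto

definition qmin :: "'v \<Rightarrow> nat" where
  "qmin u = min (card (Q_of X u)) (card (Q_of Y u))"

lemma qmin_le: "Z \<in> {X, Y} \<Longrightarrow> qmin u \<le> card (Q_of Z u)"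
  unfolding qmin_def by auto

lemma flo_le_qmin: "u \<in> V \<Longrightarrow> u \<noteq> vs \<Longrightarrow> flo Q \<Sigma> u \<le> int (qmin u)"
  using flo_le_card_Q_of[OF X_in, of u] flo_le_card_Q_of[OF Y_in, of u] by (simp add: qmin_def min_def)

text \<open>Variables whose domain has two or three values (the same for \<open>X\<close> and \<open>Y\<close>): they are
  distributed between the floor and the ceiling sums by the Local Lemma.\<close>
definition small :: "'v set" where
  "small = {u\<in>V. u \<noteq> vs \<and> u \<noteq> v0 \<and> card (Q_of X u) \<in> {2, 3}}"

definition deviation :: real where
  "deviation = log 2 (real (max_degree C vbl)) + 3"

definition unbalanced :: "'v set \<Rightarrow> 'v set \<Rightarrow> bool" where
  "unbalanced W Z \<longleftrightarrow>
     real (card Z) < real (card W) / 3 - deviation \<or> real (card (W - Z)) < real (card W) / 3 - deviation"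

lemma exists_balanced_split:
  "\<exists>T\<subseteq>small. \<forall>c\<in>C. \<not> unbalanced (vbl c \<inter> small) (T \<inter> (vbl c \<inter> small))"
proof -
  have "finite small"
    using finite_V unfolding small_def by simp
  interpret lll: subset_local_lemma small C "\<lambda>c. vbl c \<inter> small" "\<lambda>c. unbalanced (vbl c \<inter> small)"
    "2 powr (1 - deviation)" "max_degree C vbl"
  proof
    fix c assume "c \<in> C"
    show "card {j\<in>C. j \<noteq> c \<and> vbl c \<inter> small \<inter> (vbl j \<inter> small) \<noteq> {}} \<le> max_degree C vbl"
      using finite_C \<open>c \<in> C\<close> by (intro card_restricted_neighbours_le_max_degree) auto
    show "real (card {Z \<in> Pow (vbl c \<inter> small). unbalanced (vbl c \<inter> small) Z})
        \<le> 2 powr (1 - deviation) * 2 ^ card (vbl c \<inter> small)"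
      unfolding unbalanced_def using \<open>finite small\<close> by (intro card_unbalanced_subsets_le) simp
  qed (use \<open>finite small\<close> finite_C lll_parameter_bounds in \<open>auto simp: deviation_def\<close>)
  show ?thesis
    using lll.exists_avoiding .
qed

definition log_flo :: "'v \<Rightarrow> real" where
  "log_flo v = log 2 (real_of_int (flo Q \<Sigma> v))"

text \<open>Bits contributed by \<open>v\<close> to one of the sums: a small variable gives one bit iff it is
  in \<open>T'\<close>, any other variable an eighth of \<open>log_flo v\<close>; only at \<open>v0\<close>, whose two domains may
  have two or three values without \<open>v0\<close> being small, a quarter bit may be lost.\<close>
definition low_bits :: "'v set \<Rightarrow> 'v \<Rightarrow> real" where
  "low_bits T' v = (if v \<in> small then of_bool (v \<in> T') else log_flo v / 8 - (if v = v0 then 1 / 4 else 0))"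

lemma log_flo_bounds:
  assumes "c \<in> C" "v \<in> vbl c"
  shows "0 \<le> log_flo v" and "v \<noteq> vs \<Longrightarrow> log_flo v \<le> log 2 (qmin v)"
  using flo_pos[OF assms] flo_le_qmin[of v] vbl_subset[OF assms(1)] assms(2)
  unfolding log_flo_def by auto

lemma low_sum_bound:
  assumes "c \<in> C"
    and "real (card (vbl c \<inter> small)) / 3 - deviation \<le> real (card (vbl c \<inter> small \<inter> T'))"
  shows "(\<Sum>v\<in>vbl c. log_flo v) / 8 - deviation - 1 / 4 \<le> (\<Sum>v\<in>vbl c. low_bits T' v)"
proof -
  have "log_flo v \<le> 8 / 3" if "v \<in> vbl c \<inter> small" for v
  proof -
    have "qmin v \<le> 3"
      using that qmin_le[of X v] unfolding small_def by auto
    then have "log 2 (qmin v) \<le> log 2 4"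
      using that flo_le_qmin[of v] flo_pos[OF assms(1), of v] unfolding small_def
      by (intro log_mono) auto
    then show ?thesis
      using log_flo_bounds(2)[OF assms(1), of v] that log_pow_cancel[of 2 2] unfolding small_def by simp
  qed
  then show ?thesis
    unfolding low_bits_def using sum_indicator_split_lower_bound[OF finite_vbl[OF assms(1)] _ assms(2)] by blast
qed

lemma entropy_tenth_le:
  assumes "c \<in> C" "(\<Sum>v\<in>vbl c. log_flo v) / 8 - deviation - 1 / 4 \<le> x"
  shows "\<beta> / 10 * (\<Sum>v\<in>vbl c. log 2 (real (card (Q v)))) \<le> x"
proof (rule entropy_tenth_arith[OF beta_pos _ _ _ assms(2)])
  show "3 \<le> deviation"
    unfolding deviation_def by (rule lll_parameter_bounds(3))
  show "\<beta> * (\<Sum>v\<in>vbl c. log 2 (real (card (Q v)))) \<le> (\<Sum>v\<in>vbl c. log_flo v)"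
    using flo_entropy[OF assms(1)] unfolding log_flo_def .
  have "\<forall>v\<in>vbl c. 0 < card (Q v)"
    using card_Q vbl_subset[OF assms(1)] by force
  then have "log 2 (1 / viol_prob Q C vbl) \<le> (\<Sum>v\<in>vbl c. log 2 (real (card (Q v))))"
    using finite_C assms(1) finite_vbl[OF assms(1)] by (intro log_inverse_viol_prob_le)
  then show "55 / \<beta> * deviation \<le> (\<Sum>v\<in>vbl c. log 2 (real (card (Q v))))"
    using strong unfolding deviation_def by linarith
qed

end

locale coupling_split = coupling_setting V Q C vbl sat \<Sigma> h \<alpha> \<beta> X Y v0 vs
  for V :: "'v set" and Q :: "'v \<Rightarrow> 'a set" and C :: "'c set" and vbl sat \<Sigma> h \<alpha> \<beta> X Y v0 vs +
  fixes T :: "'v set"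
  assumes T_small: "T \<subseteq> small"
    and T_balanced: "\<forall>c\<in>C. \<not> unbalanced (vbl c \<inter> small) (T \<inter> (vbl c \<inter> small))"
begin

lemma card_split_side_ge:
  assumes "c \<in> C" "T' \<in> {T, small - T}"
  shows "real (card (vbl c \<inter> small)) / 3 - deviation \<le> real (card (vbl c \<inter> small \<inter> T'))"
proof -
  have "T \<inter> (vbl c \<inter> small) = vbl c \<inter> small \<inter> T"
    "vbl c \<inter> small - T \<inter> (vbl c \<inter> small) = vbl c \<inter> small \<inter> (small - T)"
    by auto
  then show ?thesis
    using T_balanced assms unfolding unbalanced_def by auto
qed

definition alph_size :: "'v \<Rightarrow> nat" where
  "alph_size u = (if u \<in> T then 1 else if u \<in> small then card (Q_of X u)
     else if 4 \<le> qmin u then floor_sqrt (qmin u) else 1)"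

definition alph :: "'v \<Rightarrow> nat set" where
  "alph u = (if u = vs then \<Sigma> vs else {0..<alph_size u})"

definition proj_map :: "('v \<Rightarrow> nat) \<Rightarrow> 'v \<Rightarrow> 'a \<Rightarrow> nat" where
  "proj_map Z u = (if u = vs then h vs else balanced_map (Q_of Z u) (alph_size u))"

lemma alph_size_pos: "0 < alph_size u"
  unfolding alph_size_def small_def by auto

lemma flo_cei_alph:
  assumes "u \<noteq> vs"
  shows "flo (Q_of Z) alph u = \<lfloor>real (card (Q_of Z u)) / real (alph_size u)\<rfloor>"
    and "cei (Q_of Z) alph u = \<lceil>real (card (Q_of Z u)) / real (alph_size u)\<rceil>"
  using assms by (simp_all add: flo_def cei_def alph_def)

lemma flo_cei_alph_vs:
  shows "flo (Q_of Z) alph vs = flo Q \<Sigma> vs" and "cei (Q_of Z) alph vs = cei Q \<Sigma> vs"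
  by (simp_all add: flo_def cei_def alph_def)

lemma balanced_onto_proj_map:
  "u \<in> V \<Longrightarrow> u \<noteq> vs \<Longrightarrow> balanced_onto (Q_of Z u) (alph_size u) (proj_map Z u)"
  using balanced_onto_balanced_map[OF finite_Q_of alph_size_pos] by (simp add: proj_map_def)

lemma proj_scheme_proj_map: "proj_scheme V (Q_of Z) alph (proj_map Z)"
  unfolding proj_scheme_def
proof
  fix v assume "v \<in> V"
  then show "finite (alph v) \<and> (\<forall>x\<in>Q_of Z v. proj_map Z v x \<in> alph v)"
    using proj balanced_onto_proj_map[of v Z]
    by (auto simp: alph_def proj_map_def proj_scheme_def balanced_onto_def)
qed

lemma balanced_proj_map: "balanced V (Q_of Z) alph (proj_map Z)"
  unfolding balanced_def
proof (intro ballI)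
  fix v y assume "v \<in> V" "y \<in> alph v"
  then show "flo (Q_of Z) alph v \<le> int (card {x \<in> Q_of Z v. proj_map Z v x = y}) \<and>
      int (card {x \<in> Q_of Z v. proj_map Z v x = y}) \<le> cei (Q_of Z) alph v"
    using balanced_h balanced_onto_proj_map[of v Z]
    by (cases "v = vs") (auto simp: balanced_def balanced_onto_def flo_cei_alph flo_cei_alph_vs alph_def proj_map_def)
qed

lemma small_variable_bounds:
  assumes "Z \<in> {X, Y}" "v \<in> small"
  shows "1 \<le> flo (Q_of Z) alph v"
    and "low_bits T v \<le> log 2 (flo (Q_of Z) alph v)"
    and "low_bits (small - T) v \<le> log 2 (card (Q_of Z v) / cei (Q_of Z) alph v)"
proof -
  define m where "m = card (Q_of Z v)"
  have v: "v \<noteq> vs" "card (Q_of X v) = m" "2 \<le> m"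
    using assms Q_of_X_eq_Y[of v] unfolding small_def m_def by auto
  then have "alph_size v = (if v \<in> T then 1 else m)"
    using assms(2) by (simp add: alph_size_def)
  then show "1 \<le> flo (Q_of Z) alph v"
    and "low_bits T v \<le> log 2 (flo (Q_of Z) alph v)"
    and "low_bits (small - T) v \<le> log 2 (card (Q_of Z v) / cei (Q_of Z) alph v)"
    using v assms(2) by (auto simp: flo_cei_alph low_bits_def m_def[symmetric])
qed

lemma large_variable_bounds:
  assumes "Z \<in> {X, Y}" "c \<in> C" "v \<in> vbl c" "v \<noteq> vs" "v \<notin> small"
  shows "1 \<le> flo (Q_of Z) alph v"
    and "low_bits T v \<le> log 2 (flo (Q_of Z) alph v)"
    and "low_bits (small - T) v \<le> log 2 (card (Q_of Z v) / cei (Q_of Z) alph v)"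
proof -
  define m where "m = card (Q_of Z v)"
  define k where "k = qmin v"
  have "v \<in> V"
    using vbl_subset assms(2,3) by blast
  have "k \<le> m" "1 \<le> k"
    using qmin_le[OF assms(1)] flo_pos[OF assms(2,3)] flo_le_qmin[OF \<open>v \<in> V\<close> assms(4)]
    unfolding k_def m_def by auto
  have log_flo_v: "0 \<le> log_flo v" "log_flo v \<le> log 2 k"
    using log_flo_bounds[OF assms(2,3)] assms(4) unfolding k_def by auto
  have "log 2 k \<le> log 2 m"
    using \<open>k \<le> m\<close> \<open>1 \<le> k\<close> by (intro log_mono) auto
  with log_flo_v have "log_flo v \<le> log 2 m"
    by linarith
  have size: "alph_size v = (if 4 \<le> k then floor_sqrt k else 1)"
    using assms(5) T_small unfolding alph_size_def k_def by auto
  have lone: "log_flo v / 8 - (if v = v0 then 1 / 4 else 0) \<le> 0" if "k < 4"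
  proof (cases "v = v0")
    case True
    have "log 2 k \<le> log 2 4"
      using that \<open>1 \<le> k\<close> by (intro log_mono) auto
    then show ?thesis
      using True log_flo_v log_pow_cancel[of 2 2] by simp
  next
    case False
    then have "k = card (Q_of X v)"
      using Q_of_X_eq_Y[OF \<open>v \<in> V\<close>] unfolding k_def qmin_def by simp
    then have "k = 1"
      using that \<open>1 \<le> k\<close> assms(4,5) \<open>v \<in> V\<close> False unfolding small_def by auto
    then show ?thesis
      using log_flo_v by simp
  qed
  show "1 \<le> flo (Q_of Z) alph v"
    and "low_bits T v \<le> log 2 (flo (Q_of Z) alph v)"
    and "low_bits (small - T) v \<le> log 2 (card (Q_of Z v) / cei (Q_of Z) alph v)"
    using log_floor_sqrt_div_bounds[OF _ \<open>k \<le> m\<close>] size lone log_flo_v \<open>log_flo v \<le> log 2 m\<close>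
      \<open>1 \<le> k\<close> \<open>k \<le> m\<close> assms(4,5)
    by (auto simp: flo_cei_alph low_bits_def m_def[symmetric] not_le)
qed

lemma vs_variable_bounds:
  assumes "c \<in> C" "vs \<in> vbl c"
  shows "1 \<le> flo (Q_of Z) alph vs" and "low_bits T' vs \<le> log 2 (flo (Q_of Z) alph vs)"
  using flo_pos[OF assms] log_flo_bounds(1)[OF assms] vs_ne_v0
  by (simp_all add: flo_cei_alph_vs low_bits_def small_def log_flo_def)

text \<open>In condition (vi) the variable \<open>v*\<close> contributes through the floor, all others
  through the ceiling; the same mixed sum gives (v) when \<open>v*\<close> does not occur.\<close>
definition mixed_bits :: "('v \<Rightarrow> nat) \<Rightarrow> 'v \<Rightarrow> real" where
  "mixed_bits Z v = (if v = vs then log 2 (flo (Q_of Z) alph v)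
     else log 2 (card (Q_of Z v) / cei (Q_of Z) alph v))"

lemma variable_bounds:
  assumes "Z \<in> {X, Y}" "c \<in> C" "v \<in> vbl c"
  shows "1 \<le> flo (Q_of Z) alph v"
    and "low_bits T v \<le> log 2 (flo (Q_of Z) alph v)"
    and "low_bits (small - T) v \<le> mixed_bits Z v"
  using vs_variable_bounds[OF assms(2)] small_variable_bounds[OF assms(1)]
    large_variable_bounds[OF assms] assms(3)
  by (cases "v = vs"; cases "v \<in> small"; simp add: mixed_bits_def)+

lemma constraint_bounds:
  assumes "Z \<in> {X, Y}" "c \<in> C"
  defines "L \<equiv> (\<Sum>v\<in>vbl c. log 2 (real (card (Q v))))"
  shows "\<beta> / 10 * L \<le> (\<Sum>v\<in>vbl c. log 2 (flo (Q_of Z) alph v))"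
    and "\<beta> / 10 * L \<le> (\<Sum>v\<in>vbl c. mixed_bits Z v)"
proof -
  have "\<beta> / 10 * L \<le> (\<Sum>v\<in>vbl c. low_bits T' v)" if "T' \<in> {T, small - T}" for T'
    unfolding L_def using entropy_tenth_le[OF assms(2) low_sum_bound[OF assms(2) card_split_side_ge[OF assms(2) that]]] .
  moreover have "(\<Sum>v\<in>vbl c. low_bits T v) \<le> (\<Sum>v\<in>vbl c. log 2 (flo (Q_of Z) alph v))"
    and "(\<Sum>v\<in>vbl c. low_bits (small - T) v) \<le> (\<Sum>v\<in>vbl c. mixed_bits Z v)"
    using variable_bounds[OF assms(1,2)] by (auto intro: sum_mono)
  ultimately show "\<beta> / 10 * L \<le> (\<Sum>v\<in>vbl c. log 2 (flo (Q_of Z) alph v))"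
    and "\<beta> / 10 * L \<le> (\<Sum>v\<in>vbl c. mixed_bits Z v)"
    by (meson insertCI order.trans)+
qed

lemma sum_mixed_bits_notin:
  "vs \<notin> W \<Longrightarrow> (\<Sum>v\<in>W. mixed_bits Z v) = (\<Sum>v\<in>W. log 2 (card (Q_of Z v) / cei (Q_of Z) alph v))"
  by (intro sum.cong) (auto simp: mixed_bits_def)

lemma sum_mixed_bits_in:
  assumes "finite W" "vs \<in> W"
  shows "(\<Sum>v\<in>W. mixed_bits Z v)
    = log 2 (flo (Q_of Z) alph vs) + (\<Sum>v\<in>W - {vs}. log 2 (card (Q_of Z v) / cei (Q_of Z) alph v))"
proof -
  have "(\<Sum>v\<in>W. mixed_bits Z v) = mixed_bits Z vs + (\<Sum>v\<in>W - {vs}. mixed_bits Z v)"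
    using assms by (rule sum.remove)
  also have "(\<Sum>v\<in>W - {vs}. mixed_bits Z v) = (\<Sum>v\<in>W - {vs}. log 2 (card (Q_of Z v) / cei (Q_of Z) alph v))"
    by (rule sum_mixed_bits_notin) simp
  finally show ?thesis
    by (simp add: mixed_bits_def)
qed

lemma entropy_bounds:
  assumes "Z \<in> {X, Y}" "c \<in> C"
  defines "L \<equiv> (\<Sum>v\<in>vbl c. log 2 (real (card (Q v))))"
  shows "\<beta> / 10 * L \<le> (\<Sum>v\<in>vbl c. log 2 (flo (Q_of Z) alph v))"
    and "vs \<notin> vbl c \<Longrightarrow> \<beta> / 10 * L \<le> (\<Sum>v\<in>vbl c. log 2 (card (Q_of Z v) / cei (Q_of Z) alph v))"
    and "vs \<in> vbl c \<Longrightarrow> \<beta> / 10 * L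
      \<le> log 2 (flo (Q_of Z) alph vs) + (\<Sum>v\<in>vbl c - {vs}. log 2 (card (Q_of Z v) / cei (Q_of Z) alph v))"
  using constraint_bounds[OF assms(1,2)] sum_mixed_bits_notin[of "vbl c" Z]
    sum_mixed_bits_in[OF finite_vbl[OF assms(2)], of Z]
  unfolding L_def by simp_all

lemma coupling_condition_proj_map:
  "coupling_condition V Q C vbl \<Sigma> h \<beta> v0 vs (Q_of X) (Q_of Y) alph (proj_map X) alph (proj_map Y)"
proof -
  have "proj_map X u = proj_map Y u" if "u \<in> V" "u \<noteq> v0" for u
    using Q_of_X_eq_Y[OF that] by (simp add: proj_map_def)
  then show ?thesis
    using balanced_proj_map variable_bounds(1)[of X] variable_bounds(1)[of Y]
      entropy_bounds[of X] entropy_bounds[of Y]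
    unfolding coupling_condition_def by (auto simp: alph_def proj_map_def)
qed

end

theorem lemma8p11:
  fixes V :: "'v set" and Q :: "'v \<Rightarrow> 'a set" and C :: "'c set"
    and vbl :: "'c \<Rightarrow> 'v set" and sat :: "'c \<Rightarrow> ('v \<Rightarrow> 'a) \<Rightarrow> bool"
    and \<Sigma> :: "'v \<Rightarrow> nat set" and h :: "'v \<Rightarrow> 'a \<Rightarrow> nat"
    and \<alpha> \<beta> :: real and X Y :: "'v \<Rightarrow> nat" and v0 vs :: 'v
  assumes "csp_formula V Q C vbl sat"
    and "atomic_constraints Q C vbl sat"
    and "C \<noteq> {}"
    and "proj_scheme V Q \<Sigma> h"
    and "entropy_criterion V Q C vbl \<Sigma> h \<alpha> \<beta>"
    and "0 < \<beta>" and "\<beta> < \<alpha>" and "\<alpha> < 1"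
    and "\<forall>v\<in>V. X v \<in> \<Sigma> v" and "\<forall>v\<in>V. Y v \<in> \<Sigma> v"
    and "v0 \<in> V" and "X v0 \<noteq> Y v0" and "\<forall>v\<in>V. v \<noteq> v0 \<longrightarrow> X v = Y v"
    and "vs \<in> V" and "vs \<noteq> v0"
    and "log 2 (1 / viol_prob Q C vbl) \<ge> 55 / \<beta> * (log 2 (real (max_degree C vbl)) + 3)"
  shows "\<exists>\<Sigma>X hX \<Sigma>Y hY.
           proj_scheme V (restr_dom Q h X vs) \<Sigma>X hX \<and>
           proj_scheme V (restr_dom Q h Y vs) \<Sigma>Y hY \<and>
           coupling_condition V Q C vbl \<Sigma> h \<beta> v0 vs
             (restr_dom Q h X vs) (restr_dom Q h Y vs) \<Sigma>X hX \<Sigma>Y hY"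
proof -
  \<comment> \<open>Not needed: atomicity, \<open>C \<noteq> {}\<close>, \<open>\<beta> < \<alpha> < 1\<close> and the \<open>\<alpha>\<close>-half of the entropy
    criterion, \<open>v0 \<in> V\<close>, \<open>vs \<in> V\<close> and \<open>X v0 \<noteq> Y v0\<close>.\<close>
  interpret coupling_setting V Q C vbl sat \<Sigma> h \<alpha> \<beta> X Y v0 vs
    using assms by unfold_locales auto
  obtain T where "T \<subseteq> small" "\<forall>c\<in>C. \<not> unbalanced (vbl c \<inter> small) (T \<inter> (vbl c \<inter> small))"
    using exists_balanced_split by blast
  then interpret coupling_split V Q C vbl sat \<Sigma> h \<alpha> \<beta> X Y v0 vs T
    by unfold_locales
  show ?thesis
    using proj_scheme_proj_map coupling_condition_proj_map by blast
qed

end
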